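(* Let $n\ge2$ and $\rho\in\mathbb{C}\setminus\{-1,0,1\}$. For every $z\in\mathbb{C}$ with $z\neq\rho$ and $z\neq1/\rho$, put $$\lambda(\rho,z)=\frac{z(1-\rho^2)}{(z-\rho)(1-z\rho)}.$$ Then $$p_{2n}(\rho,z)=\frac{(z-\rho)^n(1-z\rho)^n}{\rho^n(1-\rho^2)^{n-1}}\,\psi_n\bigl(\rho,\lambda(\rho,z)\bigr).$$ Moreover, for $z\neq0$, $\lambda(\rho,z)=\sigma(\rho,-i\ln z)$, i.e. $\lambda(\rho,z)=\frac{1-\rho^2}{1-\rho(z+z^{-1})+\rho^2}$.
   Context: $K_n(\rho)=\left[\rho^{|j-k|}\right]_{j,k=1}^n$ and $\psi_n(\rho,\lambda)=\det[\lambda I_n-K_n(\rho)]$ is its characteristic polynomial. $p_{2n}(\rho,z)=z^{2n}+(1+\rho^2)\sum_{k=1}^{n-1}z^{2k}-2\rho\sum_{k=0}^{n-1}z^{2k+1}+1$ (equal to $\frac{z^{2n}(z-\rho)^2-(\rho z-1)^2}{z^2-1}$ for $z\ne\pm1$). $\sigma(\rho,\theta)=\frac{1-\rho^2}{1-2\rho\cos\theta+\rho^2}$, extended to complex $\theta$ (so that with $\theta=-i\ln z$ one has $2\cos\theta=z+z^{-1}$). *)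

theory Defs
  imports "Jordan_Normal_Form.Char_Poly" "HOL-Analysis.Analysis"
begin

definition KMS :: "nat \<Rightarrow> complex \<Rightarrow> complex mat" where
  "KMS n \<rho> = Matrix.mat n n (\<lambda>(j, k). \<rho> ^ (if j \<le> k then k - j else j - k))"

definition psi :: "nat \<Rightarrow> complex \<Rightarrow> complex \<Rightarrow> complex" where
  "psi n \<rho> x = poly (char_poly (KMS n \<rho>)) x"

definition p2n :: "nat \<Rightarrow> complex \<Rightarrow> complex \<Rightarrow> complex" where
  "p2n n \<rho> z = z ^ (2 * n) + (1 + \<rho>\<^sup>2) * (\<Sum>k = 1..n - 1. z ^ (2 * k))
      - 2 * \<rho> * (\<Sum>k = 0..n - 1. z ^ (2 * k + 1)) + 1"

definition sigma :: "complex \<Rightarrow> complex \<Rightarrow> complex" where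
  "sigma \<rho> \<theta> = (1 - \<rho>\<^sup>2) / (1 - 2 * \<rho> * cos \<theta> + \<rho>\<^sup>2)"

definition lam :: "complex \<Rightarrow> complex \<Rightarrow> complex" where
  "lam \<rho> z = z * (1 - \<rho>\<^sup>2) / ((z - \<rho>) * (1 - z * \<rho>))"

end

theory Submission
  imports Defs
begin

(* Subtracting \<rho> times the next row from every row of K_n(\<rho>), and then doing the same
   with the columns, is a congruence by a unipotent matrix. It turns K_n(\<rho>) into
   diag(1 - \<rho>^2, ..., 1 - \<rho>^2, 1) and the identity into a tridiagonal matrix, so
   \<psi>_n(\<rho>, x) is the determinant of a tridiagonal matrix whose last diagonal entry is x - 1.
   Such determinants D_m obey D_(m+2) = a D_(m+1) - b^2 D_m. For x = \<lambda>(\<rho>, z) one has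
   a = c (1 + z^2) and b^2 = c^2 z^2 with c = \<rho>(1 - \<rho>^2)/((z - \<rho>)(1 - z\<rho>)), and p_2m
   satisfies the recurrence with coefficients 1 + z^2 and z^2, since it is a combination of z^2m and 1.
   Comparing initial values gives (1 - \<rho>^2) \<psi>_n = c^n p_2n. *)

lemma recurrence_scaled_solution:
  fixes u v :: "nat \<Rightarrow> 'a::comm_ring_1"
  assumes u_rec: "\<And>m. u (Suc (Suc m)) = c * s * u (Suc m) - c\<^sup>2 * t * u m"
    and v_rec: "\<And>m. v (Suc (Suc m)) = s * v (Suc m) - t * v m"
    and "u 0 = v 0" and "u 1 = c * v 1"
  shows "u m = c ^ m * v m"
proof (induction m rule: induct_nat_012)
  case (ge2 m)
  then have "u (Suc (Suc m)) = c * s * (c ^ Suc m * v (Suc m)) - c\<^sup>2 * t * (c ^ m * v m)"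
    by (simp add: u_rec)
  also have "\<dots> = c ^ Suc (Suc m) * (s * v (Suc m) - t * v m)"
    by (simp add: algebra_simps power2_eq_square)
  finally show ?case by (simp add: v_rec)
qed (use assms in simp_all)

definition add_next_rows :: "'a::comm_ring_1 \<Rightarrow> 'a mat \<Rightarrow> 'a mat" where
  "add_next_rows c A = Matrix.mat (dim_row A) (dim_col A)
     (\<lambda>(i, j). if Suc i < dim_row A then A $$ (i, j) + c * A $$ (Suc i, j) else A $$ (i, j))"

definition add_next_cols :: "'a::comm_ring_1 \<Rightarrow> 'a mat \<Rightarrow> 'a mat" where
  "add_next_cols c A = (add_next_rows c A\<^sup>T)\<^sup>T"

lemma dim_add_next_rows [simp]:
  "dim_row (add_next_rows c A) = dim_row A" "dim_col (add_next_rows c A) = dim_col A"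
  by (simp_all add: add_next_rows_def)

lemma dim_add_next_cols [simp]:
  "dim_row (add_next_cols c A) = dim_row A" "dim_col (add_next_cols c A) = dim_col A"
  by (simp_all add: add_next_cols_def)

lemma add_next_rows_carrier: "A \<in> carrier_mat n m \<Longrightarrow> add_next_rows c A \<in> carrier_mat n m"
  by (simp add: add_next_rows_def)

lemma index_add_next_rows:
  "i < dim_row A \<Longrightarrow> j < dim_col A \<Longrightarrow> add_next_rows c A $$ (i, j)
     = (if Suc i < dim_row A then A $$ (i, j) + c * A $$ (Suc i, j) else A $$ (i, j))"
  by (simp add: add_next_rows_def)

lemma index_add_next_cols:
  "i < dim_row A \<Longrightarrow> j < dim_col A \<Longrightarrow> add_next_cols c A $$ (i, j)
     = (if Suc j < dim_col A then A $$ (i, j) + c * A $$ (i, Suc j) else A $$ (i, j))"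
  by (simp add: add_next_cols_def add_next_rows_def)

lemma det_add_next_rows:
  assumes A: "A \<in> carrier_mat n n"
  shows "Determinant.det (add_next_rows c A) = Determinant.det A"
proof -
  define R where "R m = Matrix.mat n n (\<lambda>(i, j).
    if i < m \<and> Suc i < n then A $$ (i, j) + c * A $$ (Suc i, j) else A $$ (i, j))" for m
  have "Determinant.det (R m) = Determinant.det A" for m
  proof (induction m)
    case 0
    have "R 0 = A" by (rule eq_matI) (use A in \<open>auto simp: R_def\<close>)
    then show ?case by simp
  next
    case (Suc m)
    show ?case
    proof (cases "Suc m < n")
      case True
      \<comment> \<open>row m + 1 is still untouched when row m is modified\<close>
      have "R (Suc m) = addrow c m (Suc m) (R m)"
        by (rule eq_matI) (use A True in \<open>auto simp: R_def mat_addrow_def\<close>)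
      moreover have "Determinant.det (addrow c m (Suc m) (R m)) = Determinant.det (R m)"
        by (rule det_addrow[OF True]) (auto simp: R_def)
      ultimately show ?thesis using Suc by simp
    next
      case False
      then have "R (Suc m) = R m" by (intro eq_matI) (auto simp: R_def)
      then show ?thesis using Suc by simp
    qed
  qed
  moreover have "R n = add_next_rows c A"
    by (rule eq_matI) (use A in \<open>auto simp: R_def add_next_rows_def\<close>)
  ultimately show ?thesis by metis
qed

lemma det_add_next_cols:
  assumes "A \<in> carrier_mat n n"
  shows "Determinant.det (add_next_cols c A) = Determinant.det A"
proof -
  have AT: "A\<^sup>T \<in> carrier_mat n n" using assms by simp
  then have "add_next_rows c A\<^sup>T \<in> carrier_mat n n" by (rule add_next_rows_carrier)
  then have "Determinant.det (add_next_cols c A) = Determinant.det (add_next_rows c A\<^sup>T)"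
    unfolding add_next_cols_def by (rule Determinant.det_transpose)
  also have "\<dots> = Determinant.det A\<^sup>T" by (rule det_add_next_rows[OF AT])
  also have "\<dots> = Determinant.det A" by (rule Determinant.det_transpose[OF assms])
  finally show ?thesis .
qed

lemma add_next_rows_minus:
  "A \<in> carrier_mat n m \<Longrightarrow> B \<in> carrier_mat n m
   \<Longrightarrow> add_next_rows c (A - B) = add_next_rows c A - add_next_rows c B"
  by (intro eq_matI) (auto simp: add_next_rows_def algebra_simps)

lemma add_next_cols_minus:
  "A \<in> carrier_mat n m \<Longrightarrow> B \<in> carrier_mat n m
   \<Longrightarrow> add_next_cols c (A - B) = add_next_cols c A - add_next_cols c B"
  by (intro eq_matI) (auto simp: index_add_next_cols algebra_simps)

lemma add_next_rows_smult: "add_next_rows c (x \<cdot>\<^sub>m A) = x \<cdot>\<^sub>m add_next_rows c A"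
  by (intro eq_matI) (auto simp: add_next_rows_def algebra_simps)

lemma add_next_cols_smult: "add_next_cols c (x \<cdot>\<^sub>m A) = x \<cdot>\<^sub>m add_next_cols c A"
  by (intro eq_matI) (auto simp: index_add_next_cols algebra_simps)

definition tridiag :: "nat \<Rightarrow> 'a::comm_ring_1 \<Rightarrow> 'a \<Rightarrow> 'a \<Rightarrow> 'a mat" where
  "tridiag m a b d = Matrix.mat m m (\<lambda>(i, j).
     if i = j then (if Suc i = m then d else a) else if j = Suc i \<or> i = Suc j then b else 0)"

lemma tridiag_carrier [simp]: "tridiag m a b d \<in> carrier_mat m m"
  by (simp add: tridiag_def)

lemma dim_tridiag [simp]: "dim_row (tridiag m a b d) = m" "dim_col (tridiag m a b d) = m"
  by (simp_all add: tridiag_def)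

lemma index_tridiag:
  "i < m \<Longrightarrow> j < m \<Longrightarrow> tridiag m a b d $$ (i, j)
     = (if i = j then (if Suc i = m then d else a) else if j = Suc i \<or> i = Suc j then b else 0)"
  by (simp add: tridiag_def)

lemma smult_tridiag_minus_tridiag:
  "x \<cdot>\<^sub>m tridiag m a b d - tridiag m a' b' d' = tridiag m (x * a - a') (x * b - b') (x * d - d')"
  by (intro eq_matI) (auto simp: index_tridiag)

lemma det_tridiag_0: "Determinant.det (tridiag 0 a b d) = 1"
  by (simp add: det_dim_zero)

lemma det_tridiag_1: "Determinant.det (tridiag 1 a b d) = d"
  by (simp add: det_single index_tridiag)

lemma mat_delete_tridiag_0_0: "mat_delete (tridiag (Suc m) a b d) 0 0 = tridiag m a b d"
  by (intro eq_matI) (auto simp: mat_delete_def index_tridiag)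

lemma det_mat_delete_tridiag_0_1:
  "Determinant.det (mat_delete (tridiag (Suc (Suc m)) a b d) 0 1) = b * Determinant.det (tridiag m a b d)"
proof -
  let ?M = "mat_delete (tridiag (Suc (Suc m)) a b d) 0 1"
  have M: "?M \<in> carrier_mat (Suc m) (Suc m)" by (simp add: mat_delete_def)
  have entry: "?M $$ (0, 0) = b"
    by (simp add: mat_delete_def index_tridiag)
  have minor: "mat_delete ?M 0 0 = tridiag m a b d"
    by (intro eq_matI) (auto simp: mat_delete_def index_tridiag)
  have "Determinant.det ?M = (\<Sum>i<Suc m. ?M $$ (i, 0) * cofactor ?M i 0)"
    by (rule laplace_expansion_column[OF M]) simp
  also have "\<dots> = ?M $$ (0, 0) * cofactor ?M 0 0"
    by (subst sum.lessThan_Suc_shift) (auto intro!: sum.neutral simp: mat_delete_def index_tridiag)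
  also have "\<dots> = b * Determinant.det (tridiag m a b d)"
    by (simp only: entry cofactor_def minor) simp
  finally show ?thesis .
qed

lemma det_tridiag_Suc_Suc:
  "Determinant.det (tridiag (Suc (Suc m)) a b d)
     = a * Determinant.det (tridiag (Suc m) a b d) - b\<^sup>2 * Determinant.det (tridiag m a b d)"
proof -
  let ?T = "tridiag (Suc (Suc m)) a b d"
  have "Determinant.det ?T = (\<Sum>j<Suc (Suc m). ?T $$ (0, j) * cofactor ?T 0 j)"
    by (rule laplace_expansion_row) auto
  also have "\<dots> = ?T $$ (0, 0) * cofactor ?T 0 0 + ?T $$ (0, 1) * cofactor ?T 0 1"
    by (simp only: sum.lessThan_Suc_shift) (auto intro!: sum.neutral simp: index_tridiag)
  finally show ?thesis
    using det_mat_delete_tridiag_0_1[of m a b d]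
    by (simp add: cofactor_def mat_delete_tridiag_0_0 index_tridiag power2_eq_square)
qed

lemma add_next_rows_cols_one: "add_next_cols c (add_next_rows c (1\<^sub>m n)) = tridiag n (1 + c\<^sup>2) c 1"
  by (intro eq_matI) (auto simp: index_add_next_cols index_add_next_rows index_tridiag power2_eq_square)

lemma add_next_rows_KMS:
  fixes \<rho> :: complex
  shows "add_next_rows (- \<rho>) (KMS n \<rho>)
    = Matrix.mat n n (\<lambda>(i, j). if j \<le> i then (if Suc i < n then 1 - \<rho>\<^sup>2 else 1) * \<rho> ^ (i - j) else 0)"
proof -
  have "\<rho> ^ (j - i) = \<rho> * \<rho> ^ (j - Suc i)" if "i < j" for i j
    using that by (metis Suc_diff_Suc power_Suc)
  then show ?thesis
    by (intro eq_matI) (auto simp: KMS_def index_add_next_rows Suc_diff_le power2_eq_square algebra_simps)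
qed

lemma add_next_rows_cols_KMS:
  fixes \<rho> :: complex
  shows "add_next_cols (- \<rho>) (add_next_rows (- \<rho>) (KMS n \<rho>)) = tridiag n (1 - \<rho>\<^sup>2) 0 1"
proof -
  have "\<rho> ^ (i - j) = \<rho> * \<rho> ^ (i - Suc j)" if "j < i" for i j
    using that by (metis Suc_diff_Suc power_Suc)
  then show ?thesis
    unfolding add_next_rows_KMS
    by (intro eq_matI) (auto simp: index_add_next_cols index_tridiag)
qed

lemma psi_eq_det_tridiag:
  "psi n \<rho> x = Determinant.det (tridiag n (x * (1 + \<rho>\<^sup>2) - (1 - \<rho>\<^sup>2)) (- (x * \<rho>)) (x - 1))"
proof -
  let ?E = "\<lambda>A. add_next_cols (- \<rho>) (add_next_rows (- \<rho>) A)"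
  have K: "KMS n \<rho> \<in> carrier_mat n n" by (simp add: KMS_def)
  have "psi n \<rho> x = Determinant.det (- char_matrix (KMS n \<rho>) x)"
    unfolding psi_def by (rule char_poly_matrix[OF K])
  also have "- char_matrix (KMS n \<rho>) x = x \<cdot>\<^sub>m 1\<^sub>m n - KMS n \<rho>"
    by (intro eq_matI) (auto simp: char_matrix_def KMS_def)
  also have "Determinant.det \<dots> = Determinant.det (?E (x \<cdot>\<^sub>m 1\<^sub>m n - KMS n \<rho>))"
  proof -
    have M: "x \<cdot>\<^sub>m 1\<^sub>m n - KMS n \<rho> \<in> carrier_mat n n"
      using K by (rule minus_carrier_mat)
    then have "add_next_rows (- \<rho>) (x \<cdot>\<^sub>m 1\<^sub>m n - KMS n \<rho>) \<in> carrier_mat n n"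
      by (rule add_next_rows_carrier)
    then show ?thesis
      using det_add_next_rows[OF M] by (simp add: det_add_next_cols)
  qed
  also have "?E (x \<cdot>\<^sub>m 1\<^sub>m n - KMS n \<rho>) = x \<cdot>\<^sub>m ?E (1\<^sub>m n) - ?E (KMS n \<rho>)"
    using K by (simp add: add_next_rows_minus[of _ n n] add_next_cols_minus[of _ n n]
        add_next_rows_smult add_next_cols_smult add_next_rows_carrier[of _ n n])
  also have "\<dots> = tridiag n (x * (1 + \<rho>\<^sup>2) - (1 - \<rho>\<^sup>2)) (- (x * \<rho>)) (x - 1)"
    by (simp add: add_next_rows_cols_one add_next_rows_cols_KMS smult_tridiag_minus_tridiag)
  finally show ?thesis .
qed

(* (z^2m (z - \<rho>)^2 - (\<rho> z - 1)^2) / (z^2 - 1) with the division carried out. Unlike p2n it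
   is also right for m = 0, where its value 1 - \<rho>^2 starts the recurrence. *)
definition p2n_geom :: "nat \<Rightarrow> complex \<Rightarrow> complex \<Rightarrow> complex" where
  "p2n_geom m \<rho> z = (z - \<rho>)\<^sup>2 * (\<Sum>k<m. z ^ (2 * k)) + (1 - \<rho>\<^sup>2)"

lemma p2n_eq_p2n_geom:
  assumes "n \<ge> 1"
  shows "p2n n \<rho> z = p2n_geom n \<rho> z"
proof -
  obtain m where n: "n = Suc m" using assms by (cases n) auto
  define G where "G = (\<Sum>k<Suc m. z ^ (2 * k))"
  have even: "(\<Sum>k = 1..m. z ^ (2 * k)) = G - 1"
    by (simp add: G_def sum.atLeast1_atMost_eq sum.lessThan_Suc_shift del: sum.lessThan_Suc)
  have odd: "(\<Sum>k = 0..m. z ^ (2 * k + 1)) = z * G"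
    by (simp add: G_def sum_distrib_left atLeast0AtMost lessThan_Suc_atMost mult.commute)
  have top: "z ^ (2 * Suc m) = 1 + z\<^sup>2 * G - G"
  proof -
    have "G + z ^ (2 * Suc m) = (\<Sum>k<Suc (Suc m). z ^ (2 * k))"
      by (simp only: G_def sum.lessThan_Suc)
    also have "\<dots> = 1 + z\<^sup>2 * G"
      by (subst sum.lessThan_Suc_shift)
        (simp add: G_def sum_distrib_left distrib_left power2_eq_square mult.assoc)
    finally show ?thesis by (simp add: algebra_simps)
  qed
  have "p2n n \<rho> z = (1 + z\<^sup>2 * G - G) + (1 + \<rho>\<^sup>2) * (G - 1) - 2 * \<rho> * (z * G) + 1"
    by (simp only: p2n_def n diff_Suc_1 even odd top)
  also have "\<dots> = p2n_geom n \<rho> z"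
    unfolding p2n_geom_def n G_def [symmetric] by (simp add: algebra_simps power2_eq_square)
  finally show ?thesis .
qed

lemma p2n_geom_Suc_Suc:
  "p2n_geom (Suc (Suc m)) \<rho> z = (1 + z\<^sup>2) * p2n_geom (Suc m) \<rho> z - z\<^sup>2 * p2n_geom m \<rho> z"
  by (simp add: p2n_geom_def algebra_simps power_mult power2_eq_square)

lemma psi_lam_eq_p2n_geom:
  fixes \<rho> z :: complex
  assumes w: "(z - \<rho>) * (1 - z * \<rho>) \<noteq> 0"
  shows "(1 - \<rho>\<^sup>2) * psi n \<rho> (lam \<rho> z)
           = (\<rho> * (1 - \<rho>\<^sup>2) / ((z - \<rho>) * (1 - z * \<rho>))) ^ n * p2n_geom n \<rho> z"
proof -
  define x where "x = lam \<rho> z"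
  define c where "c = \<rho> * (1 - \<rho>\<^sup>2) / ((z - \<rho>) * (1 - z * \<rho>))"
  define D where "D m = Determinant.det (tridiag m (x * (1 + \<rho>\<^sup>2) - (1 - \<rho>\<^sup>2)) (- (x * \<rho>)) (x - 1))"
    for m
  have diag: "x * (1 + \<rho>\<^sup>2) - (1 - \<rho>\<^sup>2) = c * (1 + z\<^sup>2)"
    using w unfolding x_def c_def lam_def by (simp add: field_simps) (simp add: algebra_simps eval_nat_numeral)
  have offdiag: "(- (x * \<rho>))\<^sup>2 = c\<^sup>2 * z\<^sup>2"
    using w unfolding x_def c_def lam_def by (simp add: field_simps power2_eq_square)
  have corner: "(1 - \<rho>\<^sup>2) * (x - 1) = c * p2n_geom 1 \<rho> z"
    using w unfolding x_def c_def lam_def p2n_geom_def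
    by (simp add: field_simps) (simp add: algebra_simps eval_nat_numeral)
  have "(1 - \<rho>\<^sup>2) * D m = c ^ m * p2n_geom m \<rho> z" for m
  proof (rule recurrence_scaled_solution[where u = "\<lambda>m. (1 - \<rho>\<^sup>2) * D m"
        and v = "\<lambda>m. p2n_geom m \<rho> z" and s = "1 + z\<^sup>2" and t = "z\<^sup>2"])
    show "(1 - \<rho>\<^sup>2) * D (Suc (Suc m))
        = c * (1 + z\<^sup>2) * ((1 - \<rho>\<^sup>2) * D (Suc m)) - c\<^sup>2 * z\<^sup>2 * ((1 - \<rho>\<^sup>2) * D m)" for m
      unfolding D_def det_tridiag_Suc_Suc diag offdiag by (simp add: algebra_simps)
    show "p2n_geom (Suc (Suc m)) \<rho> z = (1 + z\<^sup>2) * p2n_geom (Suc m) \<rho> z - z\<^sup>2 * p2n_geom m \<rho> z" for m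
      by (rule p2n_geom_Suc_Suc)
    show "(1 - \<rho>\<^sup>2) * D 0 = p2n_geom 0 \<rho> z"
      by (simp add: D_def det_tridiag_0 p2n_geom_def)
    show "(1 - \<rho>\<^sup>2) * D 1 = c * p2n_geom 1 \<rho> z"
      unfolding D_def det_tridiag_1 by (rule corner)
  qed
  then show ?thesis
    by (simp add: psi_eq_det_tridiag D_def x_def c_def)
qed

lemma lam_eq_inverse_form:
  assumes "z \<noteq> 0"
  shows "lam \<rho> z = (1 - \<rho>\<^sup>2) / (1 - \<rho> * (z + inverse z) + \<rho>\<^sup>2)"
proof -
  have "1 - \<rho> * (z + inverse z) + \<rho>\<^sup>2 = (z - \<rho>) * (1 - z * \<rho>) / z"
    using assms by (simp add: field_simps power2_eq_square)
  then show ?thesis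
    using assms by (simp add: lam_def)
qed

lemma cos_minus_i_Ln:
  assumes "z \<noteq> 0"
  shows "cos (- \<i> * Ln z) = (z + inverse z) / 2"
  unfolding cos_exp_eq using assms by (simp add: exp_minus)

lemma sigma_minus_i_Ln:
  assumes "z \<noteq> 0"
  shows "sigma \<rho> (- \<i> * Ln z) = (1 - \<rho>\<^sup>2) / (1 - \<rho> * (z + inverse z) + \<rho>\<^sup>2)"
  unfolding sigma_def cos_minus_i_Ln[OF assms] by simp

lemma p2n_geom_eq_psi_lam:
  fixes \<rho> z :: complex
  assumes "n \<ge> 1" and "\<rho> \<noteq> 0" and "1 - \<rho>\<^sup>2 \<noteq> 0" and w: "(z - \<rho>) * (1 - z * \<rho>) \<noteq> 0"
  shows "p2n_geom n \<rho> z
           = (z - \<rho>) ^ n * (1 - z * \<rho>) ^ n / (\<rho> ^ n * (1 - \<rho>\<^sup>2) ^ (n - 1)) * psi n \<rho> (lam \<rho> z)"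
proof -
  obtain m where n: "n = Suc m" using assms(1) by (cases n) auto
  have "(1 - \<rho>\<^sup>2) * psi n \<rho> (lam \<rho> z)
      = (1 - \<rho>\<^sup>2) * (\<rho> ^ n * (1 - \<rho>\<^sup>2) ^ m * p2n_geom n \<rho> z / ((z - \<rho>) * (1 - z * \<rho>)) ^ n)"
    using psi_lam_eq_p2n_geom[OF w, of n] by (simp add: n power_divide power_mult_distrib mult_ac)
  then have "psi n \<rho> (lam \<rho> z) = \<rho> ^ n * (1 - \<rho>\<^sup>2) ^ m * p2n_geom n \<rho> z / ((z - \<rho>) * (1 - z * \<rho>)) ^ n"
    by (simp only: mult_left_cancel[OF assms(3)])
  then show ?thesis
    using assms(2,3) w by (simp add: n power_mult_distrib)
qed

theorem lemma3p2:
  fixes n :: nat and \<rho> z :: complex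
  assumes "n \<ge> 2"
    and "\<rho> \<notin> {-1, 0, 1}"
    and "z \<noteq> \<rho>" and "z \<noteq> 1 / \<rho>"
  shows "p2n n \<rho> z
           = (z - \<rho>) ^ n * (1 - z * \<rho>) ^ n / (\<rho> ^ n * (1 - \<rho>\<^sup>2) ^ (n - 1))
             * psi n \<rho> (lam \<rho> z)
         \<and> (z \<noteq> 0 \<longrightarrow> lam \<rho> z = sigma \<rho> (- \<i> * Ln z)
                    \<and> lam \<rho> z = (1 - \<rho>\<^sup>2) / (1 - \<rho> * (z + inverse z) + \<rho>\<^sup>2))"
proof -
  have \<rho>: "\<rho> \<noteq> 0" "1 - \<rho>\<^sup>2 \<noteq> 0"
    using assms(2) by (auto simp: power2_eq_1_iff)
  have "1 - z * \<rho> \<noteq> 0"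
    using assms(4) \<rho> by (auto simp: field_simps)
  then have w: "(z - \<rho>) * (1 - z * \<rho>) \<noteq> 0"
    using assms(3) by simp
  have "n \<ge> 1" using assms(1) by simp
  then have "p2n n \<rho> z
      = (z - \<rho>) ^ n * (1 - z * \<rho>) ^ n / (\<rho> ^ n * (1 - \<rho>\<^sup>2) ^ (n - 1)) * psi n \<rho> (lam \<rho> z)"
    using p2n_eq_p2n_geom p2n_geom_eq_psi_lam \<rho> w by simp
  moreover have "lam \<rho> z = sigma \<rho> (- \<i> * Ln z)"
    and "lam \<rho> z = (1 - \<rho>\<^sup>2) / (1 - \<rho> * (z + inverse z) + \<rho>\<^sup>2)" if "z \<noteq> 0"
    using lam_eq_inverse_form[OF that] sigma_minus_i_Ln[OF that] by simp_all
  ultimately show ?thesis by blast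
qed

end
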